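(* Let $H\in(\frac12,1)$, $T>0$, $\alpha\in\mathbb{C}$ with $\operatorname{Re}(\alpha)>0$. For $t\in[0,T)$ let $$\psi_t(u,v)=(T-u)^{\bar\alpha-1}(T-v)^{-\bar\alpha}\mathbf{1}_{\{0\le v\le u\le t\}},\qquad \phi_t(u,v)=(T-u)^{\bar\alpha-1}(T-v)^{-\bar\alpha}\mathbf{1}_{\{0\le u\le v\le t\}}.$$ Then: (i) if $\operatorname{Re}(\alpha)\in(1-H,1)$, then $\lim_{t\to T}\mathbb{E}\big[|I_{1,1}(\psi_t)|^2\big]<\infty$; (ii) if $\operatorname{Re}(\alpha)\in(0,H)$, then $\lim_{t\to T}\mathbb{E}\big[|I_{1,1}(\phi_t)|^2\big]<\infty$.
   Context: For $z\in\mathbb{C}$, $x>0$: $x^z:=\exp(z\log x)$. $\zeta_t=\frac1{\sqrt2}(B^1_t+\mathrm{i}B^2_t)$ with $B^1,B^2$ independent fractional Brownian motions with Hurst parameter $H$. Let $\mathfrak{H}$ be the complex Hilbert space obtained by completing complex step functions on $[0,T]$ under $\langle f,g\rangle_{\mathfrak H}=H(2H-1)\int_{[0,T]^2}f(t)\overline{g(s)}|t-s|^{2H-2}\mathrm{d}t\mathrm{d}s$; for deterministic $g$, $\zeta(g):=\int_0^Tg\,\mathrm{d}\zeta$ is the Wiener integral, with $\mathbb{E}[\zeta(g)\overline{\zeta(h)}]=\langle g,h\rangle_{\mathfrak H}$. The complex double Wiener–It\^o integral $I_{1,1}$ is the linear map on $\mathfrak H\otimes\mathfrak H$ with $I_{1,1}(f)=\zeta(g)\overline{\zeta(h)}-\langle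 g,h\rangle_{\mathfrak H}$ for $f(u,v)=g(u)\overline{h(v)}$, extended by linearity and the isometry $\mathbb{E}|I_{1,1}(f)|^2=\|f\|^2_{\mathfrak H\otimes\mathfrak H}=(H(2H-1))^2\int_{[0,T]^4}f(u_1,v_1)\overline{f(u_2,v_2)}|u_1-u_2|^{2H-2}|v_1-v_2|^{2H-2}\mathrm{d}u_1\mathrm{d}u_2\mathrm{d}v_1\mathrm{d}v_2$. *)

theory Defs
  imports "HOL-Analysis.Analysis"
begin

definition cpow :: "real \<Rightarrow> complex \<Rightarrow> complex" where
  "cpow x z = exp (z * complex_of_real (ln x))"

definition psi_k :: "real \<Rightarrow> complex \<Rightarrow> real \<Rightarrow> real \<Rightarrow> real \<Rightarrow> complex" where
  "psi_k T a t u v = (if 0 \<le> v \<and> v \<le> u \<and> u \<le> t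
      then cpow (T - u) (cnj a - 1) * cpow (T - v) (- cnj a) else 0)"

definition phi_k :: "real \<Rightarrow> complex \<Rightarrow> real \<Rightarrow> real \<Rightarrow> real \<Rightarrow> complex" where
  "phi_k T a t u v = (if 0 \<le> u \<and> u \<le> v \<and> v \<le> t
      then cpow (T - u) (cnj a - 1) * cpow (T - v) (- cnj a) else 0)"

text \<open>Squared norm in H (x) H, i.e. E|I_{1,1}(f)|^2 by the isometry:
  (H(2H-1))^2 \<integral>_{[0,T]^4} f(u1,v1) conj(f(u2,v2)) |u1-u2|^(2H-2) |v1-v2|^(2H-2).
  Points are (u1,(u2,(v1,v2))).\<close>
definition hh_norm2 :: "real \<Rightarrow> real \<Rightarrow> (real \<Rightarrow> real \<Rightarrow> complex) \<Rightarrow> complex" where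
  "hh_norm2 H T f = complex_of_real ((H * (2 * H - 1))\<^sup>2) *
     (LINT x : {0..T} \<times> {0..T} \<times> {0..T} \<times> {0..T} | lborel \<Otimes>\<^sub>M lborel \<Otimes>\<^sub>M lborel \<Otimes>\<^sub>M lborel.
        (case x of (u1, u2, v1, v2) \<Rightarrow>
          f u1 v1 * cnj (f u2 v2) *
          complex_of_real (\<bar>u1 - u2\<bar> powr (2 * H - 2) * \<bar>v1 - v2\<bar> powr (2 * H - 2))))"

definition EI11sq :: "real \<Rightarrow> real \<Rightarrow> (real \<Rightarrow> real \<Rightarrow> complex) \<Rightarrow> complex" where
  "EI11sq H T f = hh_norm2 H T f"

end

theory Submission
  imports Defs
begin

(* By the isometry, E|I_{1,1}(f_t)|^2 is a fourfold integral of
   f_t(u1,v1) conj(f_t(u2,v2)) |u1-u2|^(2H-2) |v1-v2|^(2H-2) over [0,T]^4, and the kernels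
   converge pointwise as t -> T, so dominated convergence applies once
   |f_t(u,v)| <= (T-u)^(s-1) (T-v)^(-s) with s - 1 > -H and -s > -H, i.e. 1 - H < s < H.
   Since T-u <= T-v on the support of psi_t, the exponent Re alpha may be lowered to
   s = min (Re alpha) (1/2); on the support of phi_t it may be raised to s = max (Re alpha) (1/2).
   The dominating function is a product of two copies of (T-x)^r (T-y)^r |x-y|^(2H-2) on [0,T]^2,
   whose integral is 2 B(r+1, 2H-1) T^(2r+2H) / (2r+2H) by the Beta integral, finite for r > -H. *)

lemma nn_integral_powr_from_0:
  fixes p X :: real
  assumes "-1 < p" "0 \<le> X"
  shows "(\<integral>\<^sup>+y. ennreal (indicator {0..X} y * y powr p) \<partial>lborel)
       = ennreal (X powr (p + 1) / (p + 1))"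
  using nn_integral_has_integral_lebesgue[OF _ has_integral_powr_from_0[OF assms]] by simp

lemma nn_integral_powr_Beta:
  fixes p q x :: real
  assumes p: "-1 < p" and q: "-1 < q" and x: "0 < x"
  shows "(\<integral>\<^sup>+y. ennreal (indicator {0..x} y * y powr p * (x - y) powr q) \<partial>lborel)
       = ennreal (x powr (p + q + 1) * Beta (p + 1) (q + 1))"
proof -
  have scale: "indicator {0..x} (x * s) * (x * s) powr p * (x - x * s) powr q
      = x powr (p + q) * (indicator {0..1} s * s powr p * (1 - s) powr q)" for s
  proof -
    have "x - x * s = x * (1 - s)" by (simp add: algebra_simps)
    then show ?thesis
      using x by (auto simp: indicator_def powr_mult powr_add zero_le_mult_iff mult_le_cancel_left1)
  qed
  have Beta: "(\<integral>\<^sup>+s. ennreal (indicator {0..1} s * s powr p * (1 - s) powr q) \<partial>lborel)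
      = ennreal (Beta (p + 1) (q + 1))"
    using has_integral_Beta_real[of "p + 1" "q + 1"] p q
    by (subst mult.assoc, subst nn_integral_has_integral_lebesgue) auto
  have "(\<integral>\<^sup>+y. ennreal (indicator {0..x} y * y powr p * (x - y) powr q) \<partial>lborel)
      = ennreal x * (\<integral>\<^sup>+s. ennreal (x powr (p + q)) *
          ennreal (indicator {0..1} s * s powr p * (1 - s) powr q) \<partial>lborel)"
    using x nn_integral_real_affine[where c = x and t = 0
        and f = "\<lambda>y. ennreal (indicator {0..x} y * y powr p * (x - y) powr q)"]
    by (simp add: scale ennreal_mult)
  also have "\<dots> = ennreal x * (ennreal (x powr (p + q)) * ennreal (Beta (p + 1) (q + 1)))"
    by (simp add: nn_integral_cmult Beta)
  also have "\<dots> = ennreal (x powr (p + q + 1) * Beta (p + 1) (q + 1))"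
    using x p q by (simp add: ennreal_mult'[symmetric] Beta_def powr_add mult_ac)
  finally show ?thesis .
qed

lemma nn_integral_powr_triangle:
  fixes r g T :: real
  assumes r: "-1 < r" and g: "-1 < g" and rg: "0 < 2 * r + g + 2" and T: "0 \<le> T"
  shows "(\<integral>\<^sup>+x. \<integral>\<^sup>+y. ennreal (indicator {0..T} x * indicator {0..<x} y
            * x powr r * y powr r * (x - y) powr g) \<partial>lborel \<partial>lborel)
       = ennreal (Beta (r + 1) (g + 1) * (T powr (2 * r + g + 2) / (2 * r + g + 2)))"
proof -
  define B where "B = Beta (r + 1) (g + 1)"
  have B: "0 \<le> B"
    using r g by (simp add: B_def Beta_def)
  have inner: "(\<integral>\<^sup>+y. ennreal (indicator {0..T} x * indicator {0..<x} y
            * x powr r * y powr r * (x - y) powr g) \<partial>lborel)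
      = ennreal B * ennreal (indicator {0..T} x * x powr (2 * r + g + 1))" for x
  proof (cases "0 < x \<and> x \<le> T")
    case True
    have "(\<integral>\<^sup>+y. ennreal (indicator {0..T} x * indicator {0..<x} y
            * x powr r * y powr r * (x - y) powr g) \<partial>lborel)
        = (\<integral>\<^sup>+y. ennreal (x powr r)
              * ennreal (indicator {0..x} y * y powr r * (x - y) powr g) \<partial>lborel)"
      using True by (intro nn_integral_cong) (auto simp: indicator_def ennreal_mult[symmetric])
    also have "\<dots> = ennreal (x powr r) * ennreal (x powr (r + g + 1) * B)"
      using True r g by (simp add: nn_integral_cmult nn_integral_powr_Beta B_def)
    also have "\<dots> = ennreal B * ennreal (indicator {0..T} x * x powr (2 * r + g + 1))"
      using True B by (simp add: ennreal_mult[symmetric] powr_add[symmetric] mult_ac add_ac)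
    finally show ?thesis .
  next
    case False
    then show ?thesis
      by (auto simp: indicator_def)
  qed
  have "(\<integral>\<^sup>+x. ennreal (indicator {0..T} x * x powr (2 * r + g + 1)) \<partial>lborel)
      = ennreal (T powr (2 * r + g + 2) / (2 * r + g + 2))"
    using nn_integral_powr_from_0[of "2 * r + g + 1" T] rg T by (simp add: add_ac)
  then show ?thesis
    unfolding inner using B
    by (subst nn_integral_cmult) (auto simp: ennreal_mult'[symmetric] B_def)
qed

lemma nn_integral_powr_square:
  fixes r g T :: real
  assumes r: "-1 < r" and g: "-1 < g" and rg: "0 < 2 * r + g + 2" and T: "0 \<le> T"
  shows "(\<integral>\<^sup>+x. \<integral>\<^sup>+y. ennreal (indicator {0..T} x * indicator {0..T} y
            * x powr r * y powr r * \<bar>x - y\<bar> powr g) \<partial>lborel \<partial>lborel)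
       = 2 * ennreal (Beta (r + 1) (g + 1) * (T powr (2 * r + g + 2) / (2 * r + g + 2)))"
proof -
  define tri where "tri x y = ennreal (indicator {0..T} x * indicator {0..<x} y
            * x powr r * y powr r * (x - y) powr g)" for x y
  have tri_measurable [measurable]: "case_prod tri \<in> borel_measurable (lborel \<Otimes>\<^sub>M lborel)"
    unfolding tri_def indicator_def atLeastLessThan_iff split_beta' by measurable
  have [measurable]: "tri x \<in> borel_measurable lborel" "(\<lambda>y. tri y x) \<in> borel_measurable lborel"
    for x
    using measurable_Pair2[OF tri_measurable, where x = x]
      measurable_Pair1[OF tri_measurable, where y = x]
    by simp_all
  \<comment> \<open>The diagonal drops out because \<open>0 powr g = 0\<close> in Isabelle, whatever the sign of \<open>g\<close>.\<close>
  have diag_split: "ennreal (indicator {0..T} x * indicator {0..T} y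
        * x powr r * y powr r * \<bar>x - y\<bar> powr g) = tri x y + tri y x" for x y
    by (cases x y rule: linorder_cases) (auto simp: tri_def indicator_def)
  have "(\<integral>\<^sup>+x. \<integral>\<^sup>+y. ennreal (indicator {0..T} x * indicator {0..T} y
            * x powr r * y powr r * \<bar>x - y\<bar> powr g) \<partial>lborel \<partial>lborel)
      = (\<integral>\<^sup>+x. \<integral>\<^sup>+y. tri x y \<partial>lborel \<partial>lborel)
        + (\<integral>\<^sup>+x. \<integral>\<^sup>+y. tri y x \<partial>lborel \<partial>lborel)"
    unfolding diag_split by (simp add: nn_integral_add split_beta')
  also have "(\<integral>\<^sup>+x. \<integral>\<^sup>+y. tri y x \<partial>lborel \<partial>lborel)
      = (\<integral>\<^sup>+x. \<integral>\<^sup>+y. tri x y \<partial>lborel \<partial>lborel)"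
    by (rule lborel_pair.Fubini'[OF tri_measurable])
  finally show ?thesis
    using nn_integral_powr_triangle[OF r g rg T] unfolding tri_def by (simp only: mult_2)
qed

definition singular_weight :: "real \<Rightarrow> real \<Rightarrow> real \<Rightarrow> real \<times> real \<Rightarrow> real" where
  "singular_weight T g r = (\<lambda>(u, v). indicator {0..T} u * indicator {0..T} v
      * (T - u) powr r * (T - v) powr r * \<bar>u - v\<bar> powr g)"

lemma singular_weight_nonneg: "0 \<le> singular_weight T g r z"
  by (auto simp: singular_weight_def indicator_def split: prod.split)

lemma borel_measurable_singular_weight [measurable]:
  "singular_weight T g r \<in> borel_measurable (lborel \<Otimes>\<^sub>M lborel)"
  unfolding singular_weight_def split_beta' by measurable

lemma nn_integral_lborel_reflect:
  fixes f :: "real \<Rightarrow> ennreal"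
  assumes [measurable]: "f \<in> borel_measurable borel"
  shows "(\<integral>\<^sup>+u. f u \<partial>lborel) = (\<integral>\<^sup>+x. f (T - x) \<partial>lborel)"
  using nn_integral_real_affine[of f "-1" T] by simp

lemma nn_integral_singular_weight:
  "(\<integral>\<^sup>+z. singular_weight T g r z \<partial>(lborel \<Otimes>\<^sub>M lborel))
     = (\<integral>\<^sup>+x. \<integral>\<^sup>+y. ennreal (indicator {0..T} x * indicator {0..T} y
            * x powr r * y powr r * \<bar>x - y\<bar> powr g) \<partial>lborel \<partial>lborel)"
proof -
  have "(\<integral>\<^sup>+z. singular_weight T g r z \<partial>(lborel \<Otimes>\<^sub>M lborel))
      = (\<integral>\<^sup>+u. \<integral>\<^sup>+v. singular_weight T g r (u, v) \<partial>lborel \<partial>lborel)"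
    by (simp add: lborel.nn_integral_fst[symmetric])
  also have "\<dots> = (\<integral>\<^sup>+x. \<integral>\<^sup>+y. singular_weight T g r (T - x, T - y) \<partial>lborel \<partial>lborel)"
    by (subst nn_integral_lborel_reflect[where T = T])
      (auto intro!: nn_integral_cong nn_integral_lborel_reflect)
  also have "\<dots> = (\<integral>\<^sup>+x. \<integral>\<^sup>+y. ennreal (indicator {0..T} x * indicator {0..T} y
            * x powr r * y powr r * \<bar>x - y\<bar> powr g) \<partial>lborel \<partial>lborel)"
    by (intro nn_integral_cong) (auto simp: singular_weight_def indicator_def abs_minus_commute)
  finally show ?thesis .
qed

lemma integrable_singular_weight:
  fixes r g T :: real
  assumes "-1 < r" "-1 < g" "0 < 2 * r + g + 2" "0 \<le> T"
  shows "integrable (lborel \<Otimes>\<^sub>M lborel) (singular_weight T g r)"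
  using nn_integral_powr_square[OF assms]
  by (intro integrableI_nonneg) (auto simp: singular_weight_nonneg nn_integral_singular_weight
      ennreal_mult_less_top)

lemma integrable_pair_pair_mult:
  fixes a :: "'a \<times> 'b \<Rightarrow> real" and c :: "'c \<times> 'd \<Rightarrow> real"
  assumes "sigma_finite_measure M2" "sigma_finite_measure M3" "sigma_finite_measure M4"
    and a: "integrable (M1 \<Otimes>\<^sub>M M2) a" and c: "integrable (M3 \<Otimes>\<^sub>M M4) c"
  shows "integrable (M1 \<Otimes>\<^sub>M M2 \<Otimes>\<^sub>M M3 \<Otimes>\<^sub>M M4)
           (\<lambda>x. a (fst x, fst (snd x)) * c (snd (snd x)))"
proof -
  interpret M2: sigma_finite_measure M2 by fact
  interpret M34: sigma_finite_measure "M3 \<Otimes>\<^sub>M M4"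
    using assms(2,3) by (rule sigma_finite_pair_measure)
  interpret M234: sigma_finite_measure "M2 \<Otimes>\<^sub>M M3 \<Otimes>\<^sub>M M4"
    using assms(1) M34.sigma_finite_measure_axioms by (rule sigma_finite_pair_measure)
  have [measurable]: "a \<in> borel_measurable (M1 \<Otimes>\<^sub>M M2)" "c \<in> borel_measurable (M3 \<Otimes>\<^sub>M M4)"
    using a c by auto
  define Na where "Na = (\<integral>\<^sup>+z. ennreal (norm (a z)) \<partial>(M1 \<Otimes>\<^sub>M M2))"
  define Nc where "Nc = (\<integral>\<^sup>+z. ennreal (norm (c z)) \<partial>(M3 \<Otimes>\<^sub>M M4))"
  have "(\<integral>\<^sup>+x. ennreal (norm (a (fst x, fst (snd x)) * c (snd (snd x))))
          \<partial>(M1 \<Otimes>\<^sub>M M2 \<Otimes>\<^sub>M M3 \<Otimes>\<^sub>M M4))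
      = (\<integral>\<^sup>+x1. \<integral>\<^sup>+y. ennreal (norm (a (x1, fst y))) * ennreal (norm (c (snd y)))
            \<partial>(M2 \<Otimes>\<^sub>M M3 \<Otimes>\<^sub>M M4) \<partial>M1)"
    by (simp add: M234.nn_integral_fst[symmetric] abs_mult ennreal_mult)
  also have "\<dots> = (\<integral>\<^sup>+x1. \<integral>\<^sup>+x2. ennreal (norm (a (x1, x2))) * Nc \<partial>M2 \<partial>M1)"
    unfolding Nc_def
    by (intro nn_integral_cong) (simp add: M34.nn_integral_fst[symmetric] nn_integral_cmult)
  also have "\<dots> = (\<integral>\<^sup>+x1. (\<integral>\<^sup>+x2. ennreal (norm (a (x1, x2))) \<partial>M2) * Nc \<partial>M1)"
    by (intro nn_integral_cong nn_integral_multc) measurable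
  also have "\<dots> = Na * Nc"
    unfolding Na_def by (simp add: M2.nn_integral_fst[symmetric] nn_integral_multc)
  also have "\<dots> < \<infinity>"
    using a c by (simp add: Na_def Nc_def integrable_iff_bounded ennreal_mult_less_top)
  finally show ?thesis
    by (intro integrableI_bounded) auto
qed

abbreviation lborel4 :: "(real \<times> real \<times> real \<times> real) measure" where
  "lborel4 \<equiv> lborel \<Otimes>\<^sub>M lborel \<Otimes>\<^sub>M lborel \<Otimes>\<^sub>M lborel"

lemma borel_measurable_cnj [measurable]:
  "(cnj :: complex \<Rightarrow> complex) \<in> borel_measurable borel"
  by (intro borel_measurable_continuous_onI continuous_intros)

definition hh_integrand ::
    "real \<Rightarrow> real \<Rightarrow> (real \<Rightarrow> real \<Rightarrow> complex) \<Rightarrow> real \<times> real \<times> real \<times> real \<Rightarrow> complex" where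
  "hh_integrand H T f = (\<lambda>(u1, u2, v1, v2).
      indicator ({0..T} \<times> {0..T} \<times> {0..T} \<times> {0..T}) (u1, u2, v1, v2) *\<^sub>R
        (f u1 v1 * cnj (f u2 v2) *
         complex_of_real (\<bar>u1 - u2\<bar> powr (2 * H - 2) * \<bar>v1 - v2\<bar> powr (2 * H - 2))))"

lemma EI11sq_eq_integral_hh_integrand:
  "EI11sq H T f = complex_of_real ((H * (2 * H - 1))\<^sup>2) *
     integral\<^sup>L lborel4 (hh_integrand H T f)"
  unfolding EI11sq_def hh_norm2_def set_lebesgue_integral_def hh_integrand_def
  by (simp add: case_prod_beta')

lemma borel_measurable_hh_integrand:
  assumes "case_prod f \<in> borel_measurable (lborel \<Otimes>\<^sub>M lborel)"
  shows "hh_integrand H T f \<in> borel_measurable lborel4"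
proof -
  have [measurable]: "(\<lambda>x. f (fst x) (fst (snd (snd x)))) \<in> borel_measurable lborel4"
    by (rule measurable_compose[OF _ assms, of "\<lambda>x. (fst x, fst (snd (snd x)))", simplified])
      measurable
  have [measurable]: "(\<lambda>x. f (fst (snd x)) (snd (snd (snd x)))) \<in> borel_measurable lborel4"
    by (rule measurable_compose[OF _ assms, of "\<lambda>x. (fst (snd x), snd (snd (snd x)))", simplified])
      measurable
  show ?thesis
    unfolding hh_integrand_def case_prod_beta' by measurable
qed

lemma norm_hh_integrand_le:
  assumes "\<And>u v. u \<in> {0..T} \<Longrightarrow> v \<in> {0..T} \<Longrightarrow>
             norm (f u v) \<le> (T - u) powr p * (T - v) powr q"
  shows "norm (hh_integrand H T f x)
     \<le> singular_weight T (2 * H - 2) p (fst x, fst (snd x))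
        * singular_weight T (2 * H - 2) q (snd (snd x))"
proof (cases "x \<in> {0..T} \<times> {0..T} \<times> {0..T} \<times> {0..T}")
  case True
  obtain u1 u2 v1 v2 where x: "x = (u1, u2, v1, v2)"
    by (cases x) auto
  have "norm (hh_integrand H T f x)
      = norm (f u1 v1) * norm (f u2 v2)
        * (\<bar>u1 - u2\<bar> powr (2 * H - 2) * \<bar>v1 - v2\<bar> powr (2 * H - 2))"
    using True by (simp add: hh_integrand_def x norm_mult)
  also have "\<dots> \<le> ((T - u1) powr p * (T - v1) powr q) * ((T - u2) powr p * (T - v2) powr q)
      * (\<bar>u1 - u2\<bar> powr (2 * H - 2) * \<bar>v1 - v2\<bar> powr (2 * H - 2))"
    using True by (intro mult_right_mono mult_mono assms) (auto simp: x)
  also have "\<dots> = singular_weight T (2 * H - 2) p (fst x, fst (snd x))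
        * singular_weight T (2 * H - 2) q (snd (snd x))"
    using True by (simp add: singular_weight_def x mult_ac)
  finally show ?thesis .
next
  case False
  then show ?thesis
    by (simp add: hh_integrand_def case_prod_beta' singular_weight_nonneg)
qed

lemma tendsto_EI11sq_at_left:
  fixes F :: "real \<Rightarrow> real \<Rightarrow> real \<Rightarrow> complex" and G :: "real \<Rightarrow> real \<Rightarrow> complex"
  assumes H: "1/2 < H" "H < 1" and pq: "-H < p" "-H < q" and T: "0 \<le> T"
    and F_measurable: "\<And>t. case_prod (F t) \<in> borel_measurable (lborel \<Otimes>\<^sub>M lborel)"
    and G_measurable: "case_prod G \<in> borel_measurable (lborel \<Otimes>\<^sub>M lborel)"
    and F_bound: "\<And>t u v. t < T \<Longrightarrow> u \<in> {0..T} \<Longrightarrow> v \<in> {0..T} \<Longrightarrow>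
                   norm (F t u v) \<le> (T - u) powr p * (T - v) powr q"
    and F_tendsto: "\<And>u v. ((\<lambda>t. F t u v) \<longlongrightarrow> G u v) (at_left T)"
  shows "((\<lambda>t. EI11sq H T (F t)) \<longlongrightarrow> EI11sq H T G) (at_left T)"
proof -
  define w where "w x = singular_weight T (2 * H - 2) p (fst x, fst (snd x))
      * singular_weight T (2 * H - 2) q (snd (snd x))" for x
  have "integrable lborel4 w"
    unfolding w_def using H pq T
    by (intro integrable_pair_pair_mult integrable_singular_weight)
      (auto intro: lborel.sigma_finite_measure_axioms)
  have "((\<lambda>t. integral\<^sup>L lborel4 (hh_integrand H T (F t)))
      \<longlongrightarrow> integral\<^sup>L lborel4 (hh_integrand H T G)) (at_left T)"
  proof (rule tendsto_at_left_sequentially[of "T - 1"])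
    fix S :: "nat \<Rightarrow> real"
    assume S: "\<And>n. S n < T" "S \<longlonglongrightarrow> T"
    have "filterlim S (at_left T) sequentially"
      using S by (intro tendsto_imp_filterlim_at_left) auto
    then have F_S: "(\<lambda>n. F (S n) u v) \<longlonglongrightarrow> G u v" for u v
      by (rule filterlim_compose[OF F_tendsto])
    show "(\<lambda>n. integral\<^sup>L lborel4 (hh_integrand H T (F (S n))))
        \<longlonglongrightarrow> integral\<^sup>L lborel4 (hh_integrand H T G)"
    proof (rule integral_dominated_convergence[where w = w])
      show "AE x in lborel4. (\<lambda>n. hh_integrand H T (F (S n)) x) \<longlonglongrightarrow> hh_integrand H T G x"
        unfolding hh_integrand_def case_prod_beta' by (intro AE_I2 tendsto_intros F_S)
      show "AE x in lborel4. norm (hh_integrand H T (F (S n)) x) \<le> w x" for n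
        unfolding w_def using F_bound[OF S(1)] by (intro AE_I2 norm_hh_integrand_le)
    qed (use \<open>integrable lborel4 w\<close> F_measurable G_measurable
        in \<open>auto intro: borel_measurable_hh_integrand\<close>)
  qed simp
  then show ?thesis
    unfolding EI11sq_eq_integral_hh_integrand by (rule tendsto_mult_left)
qed

lemma norm_cpow: "0 < x \<Longrightarrow> norm (cpow x z) = x powr Re z"
  unfolding cpow_def by (simp add: powr_def mult.commute)

lemma powr_exponent_trade_le:
  fixes X Y r s :: real
  assumes "0 < X" "0 < Y" and "X \<le> Y \<and> s \<le> r \<or> Y \<le> X \<and> r \<le> s"
  shows "X powr (r - 1) * Y powr (- r) \<le> X powr (s - 1) * Y powr (- s)"
proof -
  have ratio: "(X / Y) powr (r - s) \<le> 1"
    using assms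
    by (auto intro: powr_le1 order.trans[OF powr_mono2'[of "r - s" 1 "X / Y"]])
  have "X powr (r - 1) * Y powr (- r) = X powr (s - 1) * Y powr (- s) * (X / Y) powr (r - s)"
    using assms by (simp add: powr_divide powr_diff powr_minus field_simps)
  also have "\<dots> \<le> X powr (s - 1) * Y powr (- s)"
    using ratio by (intro mult_left_le) auto
  finally show ?thesis .
qed

lemma borel_measurable_psi_k [measurable]:
  "(\<lambda>z. psi_k T a t (fst z) (snd z)) \<in> borel_measurable (lborel \<Otimes>\<^sub>M lborel)"
  unfolding psi_k_def cpow_def by measurable

lemma borel_measurable_phi_k [measurable]:
  "(\<lambda>z. phi_k T a t (fst z) (snd z)) \<in> borel_measurable (lborel \<Otimes>\<^sub>M lborel)"
  unfolding phi_k_def cpow_def by measurable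

lemma norm_psi_k_le:
  assumes "t < T" "s \<le> Re a"
  shows "norm (psi_k T a t u v) \<le> (T - u) powr (s - 1) * (T - v) powr (- s)"
proof (cases "0 \<le> v \<and> v \<le> u \<and> u \<le> t")
  case True
  then show ?thesis
    using assms powr_exponent_trade_le[where X = "T - u" and Y = "T - v" and r = "Re a" and s = s]
    by (simp add: psi_k_def norm_mult norm_cpow)
qed (auto simp: psi_k_def)

lemma norm_phi_k_le:
  assumes "t < T" "Re a \<le> s"
  shows "norm (phi_k T a t u v) \<le> (T - u) powr (s - 1) * (T - v) powr (- s)"
proof (cases "0 \<le> u \<and> u \<le> v \<and> v \<le> t")
  case True
  then show ?thesis
    using assms powr_exponent_trade_le[where X = "T - u" and Y = "T - v" and r = "Re a" and s = s]
    by (simp add: phi_k_def norm_mult norm_cpow)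
qed (auto simp: phi_k_def)

lemma psi_k_tendsto:
  "((\<lambda>t. psi_k T a t u v) \<longlongrightarrow> (if u < T then psi_k T a T u v else 0)) (at_left T)"
proof (rule tendsto_eventually)
  have "(if u < T then u else T - 1) < T"
    by simp
  from eventually_at_left_real[OF this]
  show "\<forall>\<^sub>F t in at_left T. psi_k T a t u v = (if u < T then psi_k T a T u v else 0)"
    by eventually_elim (auto simp: psi_k_def split: if_splits)
qed

lemma phi_k_tendsto:
  "((\<lambda>t. phi_k T a t u v) \<longlongrightarrow> (if v < T then phi_k T a T u v else 0)) (at_left T)"
proof (rule tendsto_eventually)
  have "(if v < T then v else T - 1) < T"
    by simp
  from eventually_at_left_real[OF this]
  show "\<forall>\<^sub>F t in at_left T. phi_k T a t u v = (if v < T then phi_k T a T u v else 0)"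
    by eventually_elim (auto simp: phi_k_def split: if_splits)
qed

theorem proposition4p2:
  fixes H T :: real and a :: complex
  assumes "1/2 < H" "H < 1" "0 < T" "0 < Re a"
  shows "(1 - H < Re a \<and> Re a < 1 \<longrightarrow>
           (\<exists>L. ((\<lambda>t. EI11sq H T (psi_k T a t)) \<longlongrightarrow> L) (at_left T)))
       \<and> (Re a < H \<longrightarrow>
           (\<exists>L. ((\<lambda>t. EI11sq H T (phi_k T a t)) \<longlongrightarrow> L) (at_left T)))"
proof (intro conjI impI)
  assume "1 - H < Re a \<and> Re a < 1"
  then have "((\<lambda>t. EI11sq H T (psi_k T a t))
      \<longlongrightarrow> EI11sq H T (\<lambda>u v. if u < T then psi_k T a T u v else 0)) (at_left T)"
    using assms
    by (intro tendsto_EI11sq_at_left[where p = "min (Re a) (1/2) - 1" and q = "- min (Re a) (1/2)"]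
        norm_psi_k_le psi_k_tendsto) (auto simp: case_prod_beta')
  then show "\<exists>L. ((\<lambda>t. EI11sq H T (psi_k T a t)) \<longlongrightarrow> L) (at_left T)" ..
next
  assume "Re a < H"
  then have "((\<lambda>t. EI11sq H T (phi_k T a t))
      \<longlongrightarrow> EI11sq H T (\<lambda>u v. if v < T then phi_k T a T u v else 0)) (at_left T)"
    using assms
    by (intro tendsto_EI11sq_at_left[where p = "max (Re a) (1/2) - 1" and q = "- max (Re a) (1/2)"]
        norm_phi_k_le phi_k_tendsto) (auto simp: case_prod_beta')
  then show "\<exists>L. ((\<lambda>t. EI11sq H T (phi_k T a t)) \<longlongrightarrow> L) (at_left T)" ..
qed

end
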